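(* Let $k\geq 0$ be an integer and let $G$ be a graph all of whose internal vertices are of type $0$ or $1$, such that $G_0$ is non-null, and let $n_0$ be the maximum number of vertices of a connected component of $G_0$. Then $\mu_\alpha(G)\leq k$ if and only if $\mu_\alpha(G_0)\leq k$ and for every independent set $I$ in $G_1$ of size at most $(k+1)n_0$ it holds that $\alpha(G_0)-i(G_0-N(I))\leq k$.
   Context: All graphs are finite and simple; the null graph (no vertices) is allowed. For a graph $H$, $\alpha(H)$ is the maximum size of an independent set, $i(H)$ the minimum size of an inclusion-maximal independent set (both $0$ for the null graph), and $\mu_\alpha(H)=\alpha(H)-i(H)$ is the independence gap. $N(I)=\bigcup_{v\in I}N(v)$ and $G_0-N(I)$ is obtained from $G_0$ by deleting the vertices of $N(I)$. Types of vertices: let $U$ be the set of vertices of $G$ whose connected component is a complete graph. In $G-U$, vertices of degree $1$ are leaves and the others are internal vertices. An internal vertex adjacent to exactly $k$ leaves is of type $k$; every vertex of $U$ is of type $0$. $G_i$ denotes the subgraph of $G$ induced by all vertices of type $i$. *)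

theory Defs
  imports Main
begin

text \<open>All notions below are relativised to the
vertex set, so the subgraph of (V,E) induced by S \<subseteq> V is simply (S,E).\<close>

definition graph :: "'a set \<Rightarrow> ('a \<Rightarrow> 'a \<Rightarrow> bool) \<Rightarrow> bool" where
  "graph V E \<longleftrightarrow> finite V \<and> (\<forall>x y. E x y \<longrightarrow> E y x) \<and> (\<forall>x. \<not> E x x)"

definition indep_set :: "'a set \<Rightarrow> ('a \<Rightarrow> 'a \<Rightarrow> bool) \<Rightarrow> 'a set \<Rightarrow> bool" where
  "indep_set V E S \<longleftrightarrow> S \<subseteq> V \<and> (\<forall>x\<in>S. \<forall>y\<in>S. \<not> E x y)"

definition maximal_indep_set :: "'a set \<Rightarrow> ('a \<Rightarrow> 'a \<Rightarrow> bool) \<Rightarrow> 'a set \<Rightarrow> bool" where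
  "maximal_indep_set V E S \<longleftrightarrow> indep_set V E S \<and>
     (\<forall>T. indep_set V E T \<and> S \<subseteq> T \<longrightarrow> T = S)"

definition alpha :: "'a set \<Rightarrow> ('a \<Rightarrow> 'a \<Rightarrow> bool) \<Rightarrow> nat" where
  "alpha V E = Max (card ` {S. indep_set V E S})"

definition indep_dom :: "'a set \<Rightarrow> ('a \<Rightarrow> 'a \<Rightarrow> bool) \<Rightarrow> nat" where
  "indep_dom V E = Min (card ` {S. maximal_indep_set V E S})"

definition mu_alpha :: "'a set \<Rightarrow> ('a \<Rightarrow> 'a \<Rightarrow> bool) \<Rightarrow> int" where
  "mu_alpha V E = int (alpha V E) - int (indep_dom V E)"

definition nbhd :: "'a set \<Rightarrow> ('a \<Rightarrow> 'a \<Rightarrow> bool) \<Rightarrow> 'a \<Rightarrow> 'a set" where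
  "nbhd V E v = {u \<in> V. E v u}"

definition nbhd_set :: "'a set \<Rightarrow> ('a \<Rightarrow> 'a \<Rightarrow> bool) \<Rightarrow> 'a set \<Rightarrow> 'a set" where
  "nbhd_set V E I = (\<Union>v\<in>I. nbhd V E v)"

definition comp :: "'a set \<Rightarrow> ('a \<Rightarrow> 'a \<Rightarrow> bool) \<Rightarrow> 'a \<Rightarrow> 'a set" where
  "comp V E v = {u \<in> V. (\<lambda>x y. E x y \<and> x \<in> V \<and> y \<in> V)\<^sup>*\<^sup>* v u}"

definition Uset :: "'a set \<Rightarrow> ('a \<Rightarrow> 'a \<Rightarrow> bool) \<Rightarrow> 'a set" where
  "Uset V E = {v \<in> V. \<forall>x\<in>comp V E v. \<forall>y\<in>comp V E v. x \<noteq> y \<longrightarrow> E x y}"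

definition leaf :: "'a set \<Rightarrow> ('a \<Rightarrow> 'a \<Rightarrow> bool) \<Rightarrow> 'a \<Rightarrow> bool" where
  "leaf V E v \<longleftrightarrow> v \<in> V - Uset V E \<and> card (nbhd (V - Uset V E) E v) = 1"

definition internal :: "'a set \<Rightarrow> ('a \<Rightarrow> 'a \<Rightarrow> bool) \<Rightarrow> 'a \<Rightarrow> bool" where
  "internal V E v \<longleftrightarrow> v \<in> V - Uset V E \<and> card (nbhd (V - Uset V E) E v) \<noteq> 1"

definition has_type :: "'a set \<Rightarrow> ('a \<Rightarrow> 'a \<Rightarrow> bool) \<Rightarrow> nat \<Rightarrow> 'a \<Rightarrow> bool" where
  "has_type V E k v \<longleftrightarrow> (v \<in> Uset V E \<and> k = 0) \<or>
     (internal V E v \<and> card {u \<in> V. leaf V E u \<and> E v u} = k)"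

definition type_set :: "'a set \<Rightarrow> ('a \<Rightarrow> 'a \<Rightarrow> bool) \<Rightarrow> nat \<Rightarrow> 'a set" where
  "type_set V E k = {v \<in> V. has_type V E k v}"

end

(* Under the type hypothesis every vertex of type 1 carries exactly one pendant leaf, and every
   leaf hangs on a vertex of type 1.  Hence alpha(G) = |G_1| + alpha(G_0), and the maximal
   independent sets of G are exactly I + J + (leaves of G_1 - I) with I independent in G_1 and
   J maximal independent in G_0 - N(I); so i(G) = |G_1| + min_I i(G_0 - N(I)) and
   mu(G) <= k iff alpha(G_0) - i(G_0 - N(I)) <= k for every independent I of G_1.
   To restrict to small I: if I violates this, compare a maximum independent set A of G_0 with a
   minimum maximal independent set J of G_0 - N(I).  Component by component A is at least as
   large as J, so A beats J by k + 1 already on a union C of at most k + 1 components.  Let I'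
   consist of at most |C| <= (k + 1) n_0 vertices of I dominating N(I) inside C.  Some maximal
   independent set J' of G_0 - N(I') agrees with J inside C, and exchanging its part inside C
   for that of A shows |J'| + k + 1 <= |A|, so I' is a small violating set.
*)

theory Submission
  imports Defs
begin

lemma indep_set_subset: "indep_set W E S \<Longrightarrow> T \<subseteq> S \<Longrightarrow> indep_set W E T"
  unfolding indep_set_def by blast

lemma indep_set_mono: "indep_set W E S \<Longrightarrow> W \<subseteq> W' \<Longrightarrow> indep_set W' E S"
  unfolding indep_set_def by blast

lemma finite_indep_sets: "finite W \<Longrightarrow> finite {S. indep_set W E S}"
  by (rule finite_subset[of _ "Pow W"]) (auto simp: indep_set_def)

lemma finite_indep_set: "finite W \<Longrightarrow> indep_set W E S \<Longrightarrow> finite S"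
  unfolding indep_set_def by (blast intro: finite_subset)

lemma card_le_alpha: "finite W \<Longrightarrow> indep_set W E S \<Longrightarrow> card S \<le> alpha W E"
  unfolding alpha_def by (rule Max_ge) (auto intro: finite_indep_sets)

lemma alpha_attained:
  assumes "finite W"
  obtains S where "indep_set W E S" "card S = alpha W E"
proof -
  have "indep_set W E {}" by (simp add: indep_set_def)
  then have "alpha W E \<in> card ` {S. indep_set W E S}"
    unfolding alpha_def by (intro Max_in) (auto intro: finite_indep_sets assms)
  then show thesis using that by auto
qed

lemma maximal_indep_set_extend:
  assumes "finite W" "indep_set W E X"
  obtains M where "maximal_indep_set W E M" "X \<subseteq> M"
proof -
  let ?F = "{T. indep_set W E T \<and> X \<subseteq> T}"
  have fin: "finite ?F"
    by (rule finite_subset[OF _ finite_indep_sets[OF assms(1), of E]]) auto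
  have "Max (card ` ?F) \<in> card ` ?F"
    using fin assms(2) by (intro Max_in) auto
  then obtain M where M: "M \<in> ?F" "card M = Max (card ` ?F)" by auto
  have "maximal_indep_set W E M"
    unfolding maximal_indep_set_def
  proof (intro conjI allI impI)
    show "indep_set W E M" using M by auto
    fix T assume T: "indep_set W E T \<and> M \<subseteq> T"
    then have "T \<in> ?F" using M by auto
    then have "card T \<le> card M" unfolding M(2) using fin by (intro Max_ge) auto
    moreover have "finite T" using T finite_indep_set[OF assms(1)] by blast
    ultimately show "T = M" using card_seteq[of T M] T by simp
  qed
  then show thesis using that M by auto
qed

lemma finite_maximal_indep_sets: "finite W \<Longrightarrow> finite {S. maximal_indep_set W E S}"
  by (rule finite_subset[OF _ finite_indep_sets[of W E]]) (auto simp: maximal_indep_set_def)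

lemma indep_dom_le_card: "finite W \<Longrightarrow> maximal_indep_set W E S \<Longrightarrow> indep_dom W E \<le> card S"
  unfolding indep_dom_def by (rule Min_le) (auto intro: finite_maximal_indep_sets)

lemma indep_dom_attained:
  assumes "finite W"
  obtains S where "maximal_indep_set W E S" "card S = indep_dom W E"
proof -
  obtain M where "maximal_indep_set W E M"
    using maximal_indep_set_extend[OF assms, of E "{}"] by (auto simp: indep_set_def)
  then have "indep_dom W E \<in> card ` {S. maximal_indep_set W E S}"
    unfolding indep_dom_def by (intro Min_in) (auto intro: finite_maximal_indep_sets assms)
  then show thesis using that by auto
qed

lemma maximal_indep_set_iff:
  assumes sym: "\<forall>x y. E x y \<longrightarrow> E y x" and irr: "\<forall>x. \<not> E x x"
  shows "maximal_indep_set W E S \<longleftrightarrow> indep_set W E S \<and> (\<forall>v\<in>W - S. \<exists>u\<in>S. E v u)"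
proof
  assume M: "maximal_indep_set W E S"
  have "\<exists>u\<in>S. E v u" if v: "v \<in> W - S" for v
  proof (rule ccontr)
    assume "\<not> ?thesis"
    then have "indep_set W E (insert v S)"
      using M v irr sym unfolding maximal_indep_set_def indep_set_def by auto
    then show False using M v unfolding maximal_indep_set_def by blast
  qed
  then show "indep_set W E S \<and> (\<forall>v\<in>W - S. \<exists>u\<in>S. E v u)"
    using M unfolding maximal_indep_set_def by blast
next
  assume "indep_set W E S \<and> (\<forall>v\<in>W - S. \<exists>u\<in>S. E v u)"
  then show "maximal_indep_set W E S"
    unfolding maximal_indep_set_def indep_set_def by blast
qed

definition nbhd_closed :: "'a set \<Rightarrow> ('a \<Rightarrow> 'a \<Rightarrow> bool) \<Rightarrow> 'a set \<Rightarrow> bool" where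
  "nbhd_closed W E C \<longleftrightarrow> C \<subseteq> W \<and> (\<forall>x\<in>C. \<forall>y\<in>W. E x y \<longrightarrow> y \<in> C)"

lemma nbhd_closed_Union: "(\<And>C. C \<in> CC \<Longrightarrow> nbhd_closed W E C) \<Longrightarrow> nbhd_closed W E (\<Union>CC)"
  unfolding nbhd_closed_def by blast

lemma comp_subset: "comp W E v \<subseteq> W"
  by (auto simp: comp_def)

lemma comp_self: "v \<in> W \<Longrightarrow> v \<in> comp W E v"
  by (simp add: comp_def)

lemma nbhd_closed_comp: "nbhd_closed W E (comp W E v)"
  unfolding nbhd_closed_def comp_def by (auto intro: rtranclp.rtrancl_into_rtrancl)

lemma comp_eq_if_mem:
  assumes sym: "\<forall>x y. E x y \<longrightarrow> E y x" and u: "u \<in> comp W E v"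
  shows "comp W E u = comp W E v"
proof -
  let ?R = "\<lambda>x y. E x y \<and> x \<in> W \<and> y \<in> W"
  have "symp ?R" using sym by (auto intro: sympI)
  then have "?R\<^sup>*\<^sup>* v u" "?R\<^sup>*\<^sup>* u v"
    using u unfolding comp_def by (auto intro: symp_rtranclp[THEN sympD])
  then show ?thesis unfolding comp_def by (blast intro: rtranclp_trans)
qed

lemma comps_disjoint:
  assumes "\<forall>x y. E x y \<longrightarrow> E y x" "X \<in> comp W E ` W" "Y \<in> comp W E ` W" "X \<noteq> Y"
  shows "X \<inter> Y = {}"
proof -
  obtain a b where "X = comp W E a" "Y = comp W E b" using assms(2,3) by blast
  then show ?thesis
    using comp_eq_if_mem[OF assms(1), of _ W a] comp_eq_if_mem[OF assms(1), of _ W b] assms(4) by blast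
qed

lemma Union_comps: "\<Union>(comp W E ` W) = W"
  using comp_subset[of W E] comp_self[of _ W E] by blast

lemma card_Int_Union_disjoint:
  assumes "finite CC" "finite X" "\<And>Y Z. Y \<in> CC \<Longrightarrow> Z \<in> CC \<Longrightarrow> Y \<noteq> Z \<Longrightarrow> Y \<inter> Z = {}"
  shows "card (X \<inter> \<Union>CC) = (\<Sum>Y\<in>CC. card (X \<inter> Y))"
proof -
  have "X \<inter> \<Union>CC = (\<Union>Y\<in>CC. X \<inter> Y)" by blast
  also have "card \<dots> = (\<Sum>Y\<in>CC. card (X \<inter> Y))"
    using assms by (intro card_UN_disjoint) blast+
  finally show ?thesis .
qed

text \<open>No edge leaves C, so (X - C) \<union> (Y \<inter> C) is again independent.\<close>
lemma card_exchange_le_alpha: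
  assumes "finite W" "\<forall>x y. E x y \<longrightarrow> E y x" "nbhd_closed W E C"
    and "indep_set W E X" "indep_set W E Y"
  shows "card (X - C) + card (Y \<inter> C) \<le> alpha W E"
proof -
  have "indep_set W E ((X - C) \<union> (Y \<inter> C))"
    using assms(2-) unfolding indep_set_def nbhd_closed_def by blast
  then have "card ((X - C) \<union> (Y \<inter> C)) \<le> alpha W E"
    by (rule card_le_alpha[OF assms(1)])
  moreover have "finite X" "finite Y" using assms(1,4,5) by (auto intro: finite_indep_set)
  then have "card ((X - C) \<union> (Y \<inter> C)) = card (X - C) + card (Y \<inter> C)"
    by (intro card_Un_disjoint) auto
  ultimately show ?thesis by simp
qed

lemma small_subfamily_sum_ge:
  fixes g :: "'b \<Rightarrow> int"
  assumes "finite D" "\<And>Y. Y \<in> D \<Longrightarrow> g Y \<ge> 0" "(\<Sum>Y\<in>D. g Y) \<ge> int m"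
  obtains CC where "CC \<subseteq> D" "card CC \<le> m" "(\<Sum>Y\<in>CC. g Y) \<ge> int m"
proof -
  define P where "P = {Y\<in>D. g Y > 0}"
  have "(\<Sum>Y\<in>P. g Y) = (\<Sum>Y\<in>D. g Y)"
    using assms(1,2) by (intro sum.mono_neutral_left) (auto simp: P_def order.order_iff_strict)
  show thesis
  proof (cases "card P \<le> m")
    case True
    then show thesis using that[of P] assms(3) \<open>sum g P = sum g D\<close> by (auto simp: P_def)
  next
    case False
    then obtain T where T: "T \<subseteq> P" "card T = m" "finite T"
      using obtain_subset_with_card_n[of m P] by auto
    have "(\<Sum>Y\<in>T. 1) \<le> (\<Sum>Y\<in>T. g Y)"
      using T(1) by (intro sum_mono) (auto simp: P_def)
    then show thesis using that[of T] T by (auto simp: P_def)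
  qed
qed

text \<open>Exchange on a single component shows that A has at least as many vertices there as J;
  hence at most m components with positive excess already carry an excess of m.\<close>
lemma components_witness_gap:
  assumes fin: "finite W" and sym: "\<forall>x y. E x y \<longrightarrow> E y x"
    and A: "indep_set W E A" "card A = alpha W E"
    and J: "indep_set W E J" and gap: "card J + m \<le> card A"
  obtains C where "nbhd_closed W E C" "card C \<le> m * Max (card ` comp W E ` W)"
    "card (J \<inter> C) + m \<le> card (A \<inter> C)"
proof -
  define D where "D = comp W E ` W"
  have finD: "finite D" using fin by (simp add: D_def)
  have disj: "\<And>Y Z. Y \<in> D \<Longrightarrow> Z \<in> D \<Longrightarrow> Y \<noteq> Z \<Longrightarrow> Y \<inter> Z = {}"
    using comps_disjoint[OF sym, of _ W] by (auto simp: D_def)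
  have finA: "finite A" and finJ: "finite J" using A J fin by (auto intro: finite_indep_set)
  have card_split: "card (X \<inter> \<Union>CC) = (\<Sum>Y\<in>CC. card (X \<inter> Y))"
    if "CC \<subseteq> D" "finite X" for CC X
    using that finD disj by (intro card_Int_Union_disjoint) (auto intro: finite_subset)
  define g where "g Y = int (card (A \<inter> Y)) - int (card (J \<inter> Y))" for Y
  have "g Y \<ge> 0" if "Y \<in> D" for Y
  proof -
    have "card (A - Y) + card (J \<inter> Y) \<le> card A"
      using card_exchange_le_alpha[OF fin sym nbhd_closed_comp A(1) J] that A(2)
      by (auto simp: D_def)
    then show ?thesis using card_Int_Diff[OF finA, of Y] by (simp add: g_def)
  qed
  moreover have "(\<Sum>Y\<in>D. g Y) \<ge> int m"
  proof -
    have "A \<inter> \<Union>D = A" "J \<inter> \<Union>D = J"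
      unfolding D_def Union_comps using A J by (auto simp: indep_set_def)
    then show ?thesis
      using card_split[OF _ finA, of D] card_split[OF _ finJ, of D] gap
      by (simp add: g_def sum_subtractf flip: of_nat_sum)
  qed
  ultimately obtain CC where CC: "CC \<subseteq> D" "card CC \<le> m" "(\<Sum>Y\<in>CC. g Y) \<ge> int m"
    using small_subfamily_sum_ge[OF finD, of g m] by blast
  have "nbhd_closed W E (\<Union>CC)"
    using CC(1) nbhd_closed_comp[of W E] unfolding D_def by (intro nbhd_closed_Union) blast
  moreover have "card (\<Union>CC) \<le> m * Max (card ` D)"
  proof -
    have "card (\<Union>CC) \<le> (\<Sum>Y\<in>CC. card Y)" by (rule card_Union_le_sum_card)
    also have "\<dots> \<le> (\<Sum>Y\<in>CC. Max (card ` D))"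
      using CC(1) finD by (intro sum_mono Max_ge) auto
    also have "\<dots> \<le> m * Max (card ` D)" using CC(2) by simp
    finally show ?thesis .
  qed
  moreover have "card (J \<inter> \<Union>CC) + m \<le> card (A \<inter> \<Union>CC)"
    using card_split[OF CC(1) finA] card_split[OF CC(1) finJ] CC(3)
    by (simp add: g_def sum_subtractf flip: of_nat_sum)
  ultimately show thesis using that unfolding D_def by blast
qed

lemma nbhd_set_mono: "I' \<subseteq> I \<Longrightarrow> nbhd_set V E I' \<subseteq> nbhd_set V E I"
  unfolding nbhd_set_def by blast

lemma nbhd_set_cover_subset:
  assumes "finite X" "X \<subseteq> nbhd_set V E I"
  obtains I' where "I' \<subseteq> I" "card I' \<le> card X" "X \<subseteq> nbhd_set V E I'"
proof -
  obtain f where f: "\<And>x. x \<in> X \<Longrightarrow> f x \<in> I \<and> x \<in> nbhd V E (f x)"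
    using assms(2) unfolding nbhd_set_def by (metis UN_E subsetD)
  show thesis
  proof (rule that[of "f ` X"])
    show "card (f ` X) \<le> card X" using assms(1) by (rule card_image_le)
  qed (use f in \<open>auto simp: nbhd_set_def\<close>)
qed

text \<open>A vertex of C outside J and N' lies outside N, so it is still dominated by J,
  and by J \<inter> C because C is closed.\<close>
lemma maximal_indep_set_shrink_deleted:
  assumes fin: "finite W" and sym: "\<forall>x y. E x y \<longrightarrow> E y x" and irr: "\<forall>x. \<not> E x x"
    and C: "nbhd_closed W E C" and N': "N' \<subseteq> N" "C \<inter> N \<subseteq> N'"
    and J: "maximal_indep_set (W - N) E J"
  obtains J' where "maximal_indep_set (W - N') E J'" "J' \<inter> C \<subseteq> J"
proof -
  note max_iff = maximal_indep_set_iff[OF sym irr]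
  have Jind: "indep_set (W - N) E J" and Jdom: "\<forall>v\<in>W - N - J. \<exists>u\<in>J. E v u"
    using J unfolding max_iff by auto
  have "indep_set (W - N') E (J \<inter> C)"
    using Jind N'(1) by (auto simp: indep_set_def)
  then obtain J' where J': "maximal_indep_set (W - N') E J'" "J \<inter> C \<subseteq> J'"
    using maximal_indep_set_extend fin by blast
  have J'ind: "indep_set (W - N') E J'" using J'(1) unfolding max_iff by blast
  have "v \<in> J" if v: "v \<in> J' \<inter> C" for v
  proof (rule ccontr)
    assume "v \<notin> J"
    moreover have "v \<in> W - N" using v J'ind N'(2) by (auto simp: indep_set_def)
    ultimately obtain u where u: "u \<in> J" "E v u" using Jdom by blast
    then have "u \<in> C" using C v Jind by (auto simp: nbhd_closed_def indep_set_def)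
    then show False using u v J' J'ind by (auto simp: indep_set_def)
  qed
  then show thesis using that J'(1) by blast
qed

lemma small_gap_violation:
  assumes g: "graph V E" and W0: "W0 \<subseteq> V"
    and big: "indep_dom (W0 - nbhd_set V E I) E + (k + 1) \<le> alpha W0 E"
  obtains I' where "I' \<subseteq> I" "card I' \<le> (k + 1) * Max (card ` comp W0 E ` W0)"
    "indep_dom (W0 - nbhd_set V E I') E + (k + 1) \<le> alpha W0 E"
proof -
  have sym: "\<forall>x y. E x y \<longrightarrow> E y x" and irr: "\<forall>x. \<not> E x x"
    using g unfolding graph_def by auto
  have fin: "finite W0" using g W0 unfolding graph_def by (auto intro: finite_subset)
  define N where "N = nbhd_set V E I"
  obtain A where A: "indep_set W0 E A" "card A = alpha W0 E"
    using alpha_attained[OF fin] by blast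
  obtain J where J: "maximal_indep_set (W0 - N) E J" "card J = indep_dom (W0 - N) E"
    using indep_dom_attained[of "W0 - N"] fin by blast
  have "indep_set W0 E J"
    using J(1) by (auto simp: maximal_indep_set_def intro: indep_set_mono)
  then obtain C where C: "nbhd_closed W0 E C" "card C \<le> (k + 1) * Max (card ` comp W0 E ` W0)"
    "card (J \<inter> C) + (k + 1) \<le> card (A \<inter> C)"
    using components_witness_gap[OF fin sym A, of J "k + 1"] big J(2) A(2) unfolding N_def by auto
  have finC: "finite C" using C(1) fin by (auto simp: nbhd_closed_def intro: finite_subset)
  obtain I' where I': "I' \<subseteq> I" "card I' \<le> card (C \<inter> N)" "C \<inter> N \<subseteq> nbhd_set V E I'"
    using nbhd_set_cover_subset[of "C \<inter> N" V E I] finC unfolding N_def by blast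
  obtain J' where J': "maximal_indep_set (W0 - nbhd_set V E I') E J'" "J' \<inter> C \<subseteq> J"
    using maximal_indep_set_shrink_deleted[OF fin sym irr C(1) _ I'(3) J(1)]
      nbhd_set_mono[OF I'(1)] unfolding N_def by blast
  have J'ind: "indep_set W0 E J'"
    using J'(1) by (auto simp: maximal_indep_set_def intro: indep_set_mono)
  have "card (J' - C) + card (A \<inter> C) \<le> alpha W0 E"
    by (rule card_exchange_le_alpha[OF fin sym C(1) J'ind A(1)])
  moreover have "card J' = card (J' \<inter> C) + card (J' - C)"
    using finite_indep_set[OF fin J'ind] by (rule card_Int_Diff)
  moreover have "card (J' \<inter> C) \<le> card (J \<inter> C)" using J'(2) finC by (intro card_mono) auto
  moreover have "indep_dom (W0 - nbhd_set V E I') E \<le> card J'"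
    using J'(1) fin by (intro indep_dom_le_card) auto
  moreover have "card (C \<inter> N) \<le> card C" using finC by (intro card_mono) auto
  ultimately have "indep_dom (W0 - nbhd_set V E I') E + (k + 1) \<le> alpha W0 E"
    "card I' \<le> (k + 1) * Max (card ` comp W0 E ` W0)"
    using I'(2) C(2,3) by linarith+
  then show thesis using that I'(1) by blast
qed

lemma gap_bound_iff_small_sets:
  assumes "graph V E" "W0 \<subseteq> V"
  shows "(\<forall>I. indep_set W1 E I \<longrightarrow>
            int (alpha W0 E) - int (indep_dom (W0 - nbhd_set V E I) E) \<le> int k) \<longleftrightarrow>
     (mu_alpha W0 E \<le> int k \<and>
      (\<forall>I. indep_set W1 E I \<and> card I \<le> (k + 1) * Max (card ` comp W0 E ` W0) \<longrightarrow>
           int (alpha W0 E) - int (indep_dom (W0 - nbhd_set V E I) E) \<le> int k))"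
    (is "(\<forall>I. ?indep I \<longrightarrow> ?gap I) \<longleftrightarrow> _ \<and> (\<forall>I. ?indep I \<and> ?small I \<longrightarrow> ?gap I)")
proof
  assume "\<forall>I. ?indep I \<longrightarrow> ?gap I"
  moreover have "?indep {}" by (simp add: indep_set_def)
  ultimately show "mu_alpha W0 E \<le> int k \<and> (\<forall>I. ?indep I \<and> ?small I \<longrightarrow> ?gap I)"
    by (force simp: mu_alpha_def nbhd_set_def)
next
  assume "mu_alpha W0 E \<le> int k \<and> (\<forall>I. ?indep I \<and> ?small I \<longrightarrow> ?gap I)"
  then have small: "\<And>I. ?indep I \<Longrightarrow> ?small I \<Longrightarrow> ?gap I" by blast
  show "\<forall>I. ?indep I \<longrightarrow> ?gap I"
  proof (intro allI impI)
    fix I assume I: "?indep I"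
    show "?gap I"
    proof (rule ccontr)
      assume "\<not> ?gap I"
      then have "indep_dom (W0 - nbhd_set V E I) E + (k + 1) \<le> alpha W0 E" by linarith
      then obtain I' where I': "I' \<subseteq> I" "?small I'"
        "indep_dom (W0 - nbhd_set V E I') E + (k + 1) \<le> alpha W0 E"
        by (rule small_gap_violation[OF assms])
      have "?gap I'" using small I' I by (blast intro: indep_set_subset)
      then show False using I'(3) by linarith
    qed
  qed
qed

text \<open>G is the graph on V0 \<union> V1 with one pendant vertex lf v attached to each v \<in> V1;
  V0, V1 and lf ` V1 play the roles of G_0, G_1 and the leaves.\<close>
locale pendant_graph =
  fixes V :: "'a set" and E :: "'a \<Rightarrow> 'a \<Rightarrow> bool" and V0 V1 :: "'a set" and lf :: "'a \<Rightarrow> 'a"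
  assumes graph: "graph V E"
    and vertex_partition: "V = V0 \<union> V1 \<union> lf ` V1"
    and disjoint: "V0 \<inter> V1 = {}" "V0 \<inter> lf ` V1 = {}" "V1 \<inter> lf ` V1 = {}"
    and inj_lf: "inj_on lf V1"
    and pendant: "\<And>v w. v \<in> V1 \<Longrightarrow> w \<in> V \<Longrightarrow> E (lf v) w \<longleftrightarrow> w = v"
begin

lemma finite_V: "finite V" and E_sym: "\<forall>x y. E x y \<longrightarrow> E y x" and E_irrefl: "\<forall>x. \<not> E x x"
  using graph by (auto simp: graph_def)

lemma finite_V1: "finite V1"
  using finite_V vertex_partition by (auto intro: finite_subset)

lemma pendant_edge: "v \<in> V1 \<Longrightarrow> E v (lf v) \<and> E (lf v) v"
  using pendant[of v v] vertex_partition E_sym by blast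

lemma card_Int_pendant_pairs:
  assumes "finite X"
  shows "card (X \<inter> (V1 \<union> lf ` V1)) = (\<Sum>v\<in>V1. card (X \<inter> {v, lf v}))"
proof -
  have "X \<inter> (V1 \<union> lf ` V1) = (\<Union>v\<in>V1. X \<inter> {v, lf v})" by blast
  also have "card \<dots> = (\<Sum>v\<in>V1. card (X \<inter> {v, lf v}))"
  proof (rule card_UN_disjoint[OF finite_V1])
    show "\<forall>v\<in>V1. \<forall>w\<in>V1. v \<noteq> w \<longrightarrow> X \<inter> {v, lf v} \<inter> (X \<inter> {w, lf w}) = {}"
      using disjoint(3) inj_lf by (auto dest: inj_onD)
  qed (use assms in simp)
  finally show ?thesis .
qed

lemma card_split_V0:
  assumes "S \<subseteq> V"
  shows "card S = card (S \<inter> V0) + card (S \<inter> (V1 \<union> lf ` V1))"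
proof -
  have split: "(S \<inter> V0) \<union> (S \<inter> (V1 \<union> lf ` V1)) = S" using assms vertex_partition by blast
  have "finite S" using assms finite_V by (rule finite_subset)
  then have "card ((S \<inter> V0) \<union> (S \<inter> (V1 \<union> lf ` V1))) = card (S \<inter> V0) + card (S \<inter> (V1 \<union> lf ` V1))"
    using disjoint(1,2) by (intro card_Un_disjoint) auto
  then show ?thesis unfolding split .
qed

lemma pendant_neighbour_in_V1: "x \<in> lf ` V1 \<Longrightarrow> y \<in> V \<Longrightarrow> E x y \<or> E y x \<Longrightarrow> y \<in> V1"
  using pendant E_sym by blast

text \<open>An independent set contains at most one vertex of each pendant edge, a maximal one exactly one.\<close>
lemma card_indep_set_pendant_le:
  assumes "indep_set V E S"
  shows "card (S \<inter> (V1 \<union> lf ` V1)) \<le> card V1"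
proof -
  have "card (S \<inter> {v, lf v}) \<le> 1" if "v \<in> V1" for v
    using assms pendant_edge[OF that] by (auto simp: indep_set_def card_le_Suc0_iff_eq)
  then have "(\<Sum>v\<in>V1. card (S \<inter> {v, lf v})) \<le> (\<Sum>v\<in>V1. 1)" by (rule sum_mono)
  then show ?thesis
    using assms finite_V card_Int_pendant_pairs by (simp add: finite_indep_set)
qed

lemma card_maximal_indep_set_pendant:
  assumes S: "maximal_indep_set V E S"
  shows "card (S \<inter> (V1 \<union> lf ` V1)) = card V1"
proof -
  have Sind: "indep_set V E S" and Sdom: "\<forall>x\<in>V - S. \<exists>u\<in>S. E x u"
    using S unfolding maximal_indep_set_iff[OF E_sym E_irrefl] by auto
  have "S \<inter> {v, lf v} \<noteq> {}" if v: "v \<in> V1" for v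
  proof
    assume empty: "S \<inter> {v, lf v} = {}"
    then have "lf v \<in> V - S" using v vertex_partition by auto
    then obtain u where "u \<in> S" "E (lf v) u" using Sdom by blast
    then show False using pendant[OF v] Sind empty by (auto simp: indep_set_def)
  qed
  moreover have "finite S" using Sind finite_V by (simp add: finite_indep_set)
  ultimately have "(\<Sum>v\<in>V1. 1) \<le> (\<Sum>v\<in>V1. card (S \<inter> {v, lf v}))"
    by (intro sum_mono) (simp add: Suc_le_eq card_gt_0_iff)
  then show ?thesis
    using card_indep_set_pendant_le[OF Sind] card_Int_pendant_pairs \<open>finite S\<close> by simp
qed

lemma alpha_eq: "alpha V E = card V1 + alpha V0 E"
proof (rule antisym)
  obtain S where S: "indep_set V E S" "card S = alpha V E"
    using alpha_attained[OF finite_V] by blast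
  have "indep_set V0 E (S \<inter> V0)" using S(1) by (auto simp: indep_set_def)
  then have "card (S \<inter> V0) \<le> alpha V0 E"
    using finite_V vertex_partition by (intro card_le_alpha) (auto intro: finite_subset)
  then show "alpha V E \<le> card V1 + alpha V0 E"
    using S card_split_V0 card_indep_set_pendant_le[OF S(1)] by (force simp: indep_set_def)
next
  obtain A where A: "indep_set V0 E A" "card A = alpha V0 E"
    using alpha_attained finite_V vertex_partition by (metis finite_Un)
  have AV0: "A \<subseteq> V0" using A(1) by (simp add: indep_set_def)
  have "indep_set V E (A \<union> lf ` V1)"
    unfolding indep_set_def
  proof (intro conjI ballI notI)
    show AL: "A \<union> lf ` V1 \<subseteq> V" using AV0 vertex_partition by blast
    fix x y assume x: "x \<in> A \<union> lf ` V1" and y: "y \<in> A \<union> lf ` V1" and "E x y"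
    then have "x \<notin> lf ` V1" and "y \<notin> lf ` V1"
      using pendant_neighbour_in_V1[of x y] pendant_neighbour_in_V1[of y x] AL AV0 disjoint
      by blast+
    then show False using x y \<open>E x y\<close> A(1) by (auto simp: indep_set_def)
  qed
  then have "card (A \<union> lf ` V1) \<le> alpha V E" by (rule card_le_alpha[OF finite_V])
  moreover have "card (A \<union> lf ` V1) = card A + card V1"
    using A(1) disjoint(2) finite_V1 card_image[OF inj_lf] finite_V vertex_partition
    by (subst card_Un_disjoint) (auto simp: indep_set_def intro: finite_subset)
  ultimately show "card V1 + alpha V0 E \<le> alpha V E" using A(2) by linarith
qed

lemma indep_dom_lower_bound:
  assumes S: "maximal_indep_set V E S"
  shows "card V1 + indep_dom (V0 - nbhd_set V E (S \<inter> V1)) E \<le> card S"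
proof -
  let ?N = "nbhd_set V E (S \<inter> V1)"
  have Sind: "indep_set V E S" and Sdom: "\<forall>x\<in>V - S. \<exists>u\<in>S. E x u"
    using S unfolding maximal_indep_set_iff[OF E_sym E_irrefl] by auto
  have J: "indep_set (V0 - ?N) E (S \<inter> V0)"
    using Sind by (auto simp: indep_set_def nbhd_set_def nbhd_def)
  have "\<exists>u\<in>S \<inter> V0. E v u" if v: "v \<in> V0 - ?N - S \<inter> V0" for v
  proof -
    have vV: "v \<in> V" using v vertex_partition by blast
    then obtain u where u: "u \<in> S" "E v u" using Sdom v by blast
    have uV: "u \<in> V" using u Sind by (auto simp: indep_set_def)
    have "u \<notin> lf ` V1" using pendant_neighbour_in_V1[OF _ vV] u(2) v disjoint(1) by blast
    moreover have "u \<notin> V1" using u v vV E_sym by (auto simp: nbhd_set_def nbhd_def)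
    ultimately show ?thesis using u uV vertex_partition by blast
  qed
  then have "maximal_indep_set (V0 - ?N) E (S \<inter> V0)"
    using J unfolding maximal_indep_set_iff[OF E_sym E_irrefl] by blast
  then have "indep_dom (V0 - ?N) E \<le> card (S \<inter> V0)"
    using finite_V vertex_partition by (intro indep_dom_le_card) (auto intro: finite_subset)
  then show ?thesis
    using card_split_V0 card_maximal_indep_set_pendant[OF S] Sind by (force simp: indep_set_def)
qed

lemma maximal_indep_set_completion:
  assumes I: "indep_set V1 E I" and J: "maximal_indep_set (V0 - nbhd_set V E I) E J"
  shows "maximal_indep_set V E (I \<union> J \<union> lf ` (V1 - I))"
proof -
  let ?S = "I \<union> J \<union> lf ` (V1 - I)"
  have IV1: "I \<subseteq> V1" using I by (simp add: indep_set_def)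
  have Jind: "indep_set (V0 - nbhd_set V E I) E J" and Jdom: "\<forall>x\<in>V0 - nbhd_set V E I - J. \<exists>u\<in>J. E x u"
    using J unfolding maximal_indep_set_iff[OF E_sym E_irrefl] by auto
  have JV0: "J \<subseteq> V0" and JN: "J \<inter> nbhd_set V E I = {}" using Jind by (auto simp: indep_set_def)
  have SV: "?S \<subseteq> V" using IV1 JV0 vertex_partition by blast
  have no_leaf: "x \<notin> lf ` (V1 - I)" if "x \<in> ?S" "y \<in> ?S" "E x y \<or> E y x" for x y
  proof
    assume "x \<in> lf ` (V1 - I)"
    then obtain v where v: "v \<in> V1 - I" "x = lf v" by blast
    then have "y = v" using pendant[of v y] that(2,3) SV E_sym by blast
    then show False
      using v that(2) JV0 disjoint(1,3) inj_lf by (auto dest: inj_onD)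
  qed
  have "indep_set V E ?S"
    unfolding indep_set_def
  proof (intro conjI ballI notI)
    fix x y assume x: "x \<in> ?S" and y: "y \<in> ?S" and "E x y"
    then have "x \<in> I \<union> J" "y \<in> I \<union> J" using no_leaf[OF x y] no_leaf[OF y x] by blast+
    moreover have "y \<notin> J" if "x \<in> I" using that JN \<open>E x y\<close> SV y
      by (auto simp: nbhd_set_def nbhd_def)
    moreover have "x \<notin> J" if "y \<in> I" using that JN E_sym[rule_format, OF \<open>E x y\<close>] SV x
      by (auto simp: nbhd_set_def nbhd_def)
    ultimately show False using I Jind \<open>E x y\<close> by (auto simp: indep_set_def)
  qed (use SV in simp)
  moreover have "\<exists>u\<in>?S. E x u" if x: "x \<in> V - ?S" for x
  proof -
    consider "x \<in> V0" | "x \<in> V1" | "x \<in> lf ` V1" using x vertex_partition by blast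
    then show ?thesis
    proof cases
      case 1
      show ?thesis
      proof (cases "x \<in> nbhd_set V E I")
        case True
        then show ?thesis using E_sym by (auto simp: nbhd_set_def nbhd_def)
      next
        case False
        then show ?thesis using Jdom 1 x by blast
      qed
    next
      case 2
      then show ?thesis using x pendant_edge by blast
    next
      case 3
      then show ?thesis using x pendant_edge by blast
    qed
  qed
  ultimately show ?thesis unfolding maximal_indep_set_iff[OF E_sym E_irrefl] by blast
qed

lemma indep_dom_upper_bound:
  assumes I: "indep_set V1 E I" and J: "maximal_indep_set (V0 - nbhd_set V E I) E J"
  shows "indep_dom V E \<le> card V1 + card J"
proof -
  let ?S = "I \<union> J \<union> lf ` (V1 - I)"
  have S: "maximal_indep_set V E ?S" using maximal_indep_set_completion[OF I J] .
  have "J \<subseteq> V0" "I \<subseteq> V1" using I J by (auto simp: maximal_indep_set_def indep_set_def)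
  then have "?S \<inter> V0 = J" using disjoint by blast
  moreover have "?S \<subseteq> V" using S by (simp add: maximal_indep_set_def indep_set_def)
  ultimately have "card ?S = card J + card V1"
    using card_split_V0 card_maximal_indep_set_pendant[OF S] by metis
  then show ?thesis using indep_dom_le_card[OF finite_V S] by simp
qed

lemma mu_alpha_le_iff:
  "mu_alpha V E \<le> int k \<longleftrightarrow>
   (\<forall>I. indep_set V1 E I \<longrightarrow> int (alpha V0 E) - int (indep_dom (V0 - nbhd_set V E I) E) \<le> int k)"
proof
  assume mu: "mu_alpha V E \<le> int k"
  show "\<forall>I. indep_set V1 E I \<longrightarrow> int (alpha V0 E) - int (indep_dom (V0 - nbhd_set V E I) E) \<le> int k"
  proof (intro allI impI)
    fix I assume I: "indep_set V1 E I"
    have "finite (V0 - nbhd_set V E I)" using finite_V vertex_partition by (auto intro: finite_subset)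
    then obtain J where J: "maximal_indep_set (V0 - nbhd_set V E I) E J"
      "card J = indep_dom (V0 - nbhd_set V E I) E" by (rule indep_dom_attained)
    show "int (alpha V0 E) - int (indep_dom (V0 - nbhd_set V E I) E) \<le> int k"
      using indep_dom_upper_bound[OF I J(1)] mu alpha_eq J(2) unfolding mu_alpha_def by linarith
  qed
next
  assume H: "\<forall>I. indep_set V1 E I \<longrightarrow> int (alpha V0 E) - int (indep_dom (V0 - nbhd_set V E I) E) \<le> int k"
  obtain S where S: "maximal_indep_set V E S" "card S = indep_dom V E"
    using indep_dom_attained[OF finite_V] by blast
  have "indep_set V1 E (S \<inter> V1)" using S(1) by (auto simp: maximal_indep_set_def indep_set_def)
  then show "mu_alpha V E \<le> int k"
    using H indep_dom_lower_bound[OF S(1)] S(2) alpha_eq unfolding mu_alpha_def by fastforce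
qed

end

lemma comp_eq_if_adjacent:
  assumes "graph V E" "v \<in> V" "w \<in> V" "E v w"
  shows "comp V E v = comp V E w"
proof -
  have "v \<in> comp V E w" using assms unfolding comp_def graph_def by (auto intro: r_into_rtranclp)
  then show ?thesis by (rule comp_eq_if_mem[rotated]) (use assms(1) in \<open>simp add: graph_def\<close>)
qed

lemma adjacent_Uset_iff:
  assumes "graph V E" "v \<in> V" "w \<in> V" "E v w"
  shows "v \<in> Uset V E \<longleftrightarrow> w \<in> Uset V E"
  using comp_eq_if_adjacent[OF assms] assms(2,3) unfolding Uset_def by auto

lemma has_type_unique: "has_type V E k v \<Longrightarrow> has_type V E l v \<Longrightarrow> k = l"
  unfolding has_type_def internal_def by auto

lemma leaf_no_type: "leaf V E x \<Longrightarrow> \<not> has_type V E k x"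
  unfolding has_type_def internal_def leaf_def by auto

context
  fixes V :: "'a set" and E :: "'a \<Rightarrow> 'a \<Rightarrow> bool"
  assumes graph: "graph V E"
    and types01: "\<forall>v. internal V E v \<longrightarrow> has_type V E 0 v \<or> has_type V E 1 v"
begin

private lemma E_sym: "E x y \<Longrightarrow> E y x"
  using graph by (auto simp: graph_def)

lemma leaf_nbhd_singleton:
  assumes "leaf V E x"
  obtains p where "nbhd V E x = {p}" "p \<notin> Uset V E"
proof -
  have x: "x \<in> V" "x \<notin> Uset V E" and one: "card (nbhd (V - Uset V E) E x) = 1"
    using assms unfolding leaf_def by auto
  obtain p where p: "nbhd (V - Uset V E) E x = {p}" using one by (rule card_1_singletonE)
  have "nbhd V E x = nbhd (V - Uset V E) E x"
    using adjacent_Uset_iff[OF graph x(1)] x(2) unfolding nbhd_def by auto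
  then show thesis using that p by (auto simp: nbhd_def)
qed

text \<open>The neighbour of a leaf is not a leaf: otherwise their component would be the
  complete graph on two vertices and they would lie in U.\<close>
lemma leaf_neighbour_type1:
  assumes x: "leaf V E x" and p: "nbhd V E x = {p}"
  shows "p \<in> type_set V E 1"
proof -
  have xV: "x \<in> V" "x \<notin> Uset V E" using x by (auto simp: leaf_def)
  have pV: "p \<in> V" "E x p" using p by (auto simp: nbhd_def)
  have pU: "p \<notin> Uset V E" using adjacent_Uset_iff[OF graph xV(1) pV] xV(2) by blast
  have "\<not> leaf V E p"
  proof
    assume "leaf V E p"
    then obtain q where q: "nbhd V E p = {q}" by (rule leaf_nbhd_singleton)
    have "x \<in> nbhd V E p" using xV(1) E_sym[OF pV(2)] by (simp add: nbhd_def)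
    then have "q = x" using q by simp
    have "(\<lambda>a b. E a b \<and> a \<in> V \<and> b \<in> V)\<^sup>*\<^sup>* x u \<Longrightarrow> u \<in> {x, p}" for u
      by (induction rule: rtranclp_induct) (use p q \<open>q = x\<close> in \<open>auto simp: nbhd_def\<close>)
    then have "comp V E x \<subseteq> {x, p}" by (auto simp: comp_def)
    then have "x \<in> Uset V E" using xV(1) pV(2) E_sym by (auto simp: Uset_def)
    then show False using xV(2) by blast
  qed
  then have "internal V E p" using pV(1) pU by (auto simp: leaf_def internal_def)
  moreover have "card {u \<in> V. leaf V E u \<and> E p u} \<noteq> 0"
    using xV(1) x pV(2) E_sym graph by (auto simp: graph_def)
  ultimately have "has_type V E 1 p" using types01 pU by (auto simp: has_type_def)
  then show ?thesis using pV(1) by (simp add: type_set_def)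
qed

lemma type1_unique_leaf:
  assumes "v \<in> type_set V E 1"
  shows "\<exists>!x. leaf V E x \<and> E v x"
proof -
  have "card {u \<in> V. leaf V E u \<and> E v u} = 1"
    using assms by (auto simp: type_set_def has_type_def)
  then obtain x where x: "{u \<in> V. leaf V E u \<and> E v u} = {x}" by (rule card_1_singletonE)
  have leaf_V: "leaf V E u \<Longrightarrow> u \<in> V" for u by (simp add: leaf_def)
  show ?thesis
  proof (rule ex1I[of _ x])
    show "leaf V E x \<and> E v x" using x by blast
    show "y = x" if "leaf V E y \<and> E v y" for y using x that leaf_V by blast
  qed
qed

lemma pendant_graph_types:
  "pendant_graph V E (type_set V E 0) (type_set V E 1) (\<lambda>v. THE x. leaf V E x \<and> E v x)"
proof
  let ?V0 = "type_set V E 0" and ?V1 = "type_set V E 1" and ?lf = "\<lambda>v. THE x. leaf V E x \<and> E v x"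
  have lf: "leaf V E (?lf v) \<and> E v (?lf v)" if "v \<in> ?V1" for v
    using theI'[OF type1_unique_leaf[OF that]] .
  have lf_eq: "?lf v = x" if "v \<in> ?V1" "leaf V E x" "E v x" for v x
    using the1_equality[OF type1_unique_leaf[OF that(1)]] that(2,3) by blast
  have leaf_nbhd: "nbhd V E (?lf v) = {v}" if v: "v \<in> ?V1" for v
  proof -
    obtain p where p: "nbhd V E (?lf v) = {p}" using leaf_nbhd_singleton lf[OF v] by blast
    moreover have "v \<in> nbhd V E (?lf v)" using v lf[OF v] E_sym by (auto simp: nbhd_def type_set_def)
    ultimately show ?thesis by simp
  qed
  show "graph V E" by (rule graph)
  show "V = ?V0 \<union> ?V1 \<union> ?lf ` ?V1"
  proof (intro equalityI subsetI)
    fix v assume v: "v \<in> V"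
    show "v \<in> ?V0 \<union> ?V1 \<union> ?lf ` ?V1"
    proof (cases "leaf V E v")
      case True
      obtain p where p: "nbhd V E v = {p}" using leaf_nbhd_singleton True by blast
      then have "p \<in> ?V1" using leaf_neighbour_type1 True by blast
      moreover have "?lf p = v" using lf_eq[OF \<open>p \<in> ?V1\<close> True] p E_sym by (auto simp: nbhd_def)
      ultimately show ?thesis by blast
    next
      case False
      then have "v \<in> Uset V E \<or> internal V E v" using v by (auto simp: leaf_def internal_def)
      then show ?thesis using v types01 by (auto simp: type_set_def has_type_def)
    qed
  qed (use lf in \<open>auto simp: type_set_def leaf_def\<close>)
  show "?V0 \<inter> ?V1 = {}" using has_type_unique by (fastforce simp: type_set_def)
  show "?V0 \<inter> ?lf ` ?V1 = {}" "?V1 \<inter> ?lf ` ?V1 = {}"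
    using lf leaf_no_type by (fastforce simp: type_set_def)+
  show "inj_on ?lf ?V1"
  proof (rule inj_onI)
    fix v w assume v: "v \<in> ?V1" and w: "w \<in> ?V1" and "?lf v = ?lf w"
    then have "nbhd V E (?lf v) = nbhd V E (?lf w)" by simp
    then show "v = w" unfolding leaf_nbhd[OF v] leaf_nbhd[OF w] by simp
  qed
  show "E (?lf v) w \<longleftrightarrow> w = v" if "v \<in> ?V1" "w \<in> V" for v w
    using leaf_nbhd[OF that(1)] that(2) by (auto simp: nbhd_def)
qed

end

theorem theorem9:
  fixes V :: "'a set" and E :: "'a \<Rightarrow> 'a \<Rightarrow> bool" and k :: nat
  assumes "graph V E"
    and "\<forall>v. internal V E v \<longrightarrow> has_type V E 0 v \<or> has_type V E 1 v"
    and "type_set V E 0 \<noteq> {}"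
  shows "mu_alpha V E \<le> int k \<longleftrightarrow>
     (mu_alpha (type_set V E 0) E \<le> int k \<and>
      (\<forall>I. indep_set (type_set V E 1) E I \<and>
           card I \<le> (k + 1) * Max (card ` comp (type_set V E 0) E ` type_set V E 0) \<longrightarrow>
           int (alpha (type_set V E 0) E)
             - int (indep_dom (type_set V E 0 - nbhd_set V E I) E) \<le> int k))"
proof -
  interpret pendant_graph V E "type_set V E 0" "type_set V E 1" "\<lambda>v. THE x. leaf V E x \<and> E v x"
    using pendant_graph_types[OF assms(1,2)] .
  have "type_set V E 0 \<subseteq> V" by (auto simp: type_set_def)
  from gap_bound_iff_small_sets[OF assms(1) this] show ?thesis
    unfolding mu_alpha_le_iff .
qed

end
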